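(* There is an absolute constant $\delta>0$ such that the following holds (for $c_0$ a sufficiently large constant, $n$ sufficiently large and $\epsilon\in[c_0/\sqrt n,1)$). With probability at least $0.01$ over $\mathbf A,\mathbf T,\mathbf b$ (drawn as in $\mathcal D_{\mathrm{yes}}$ / $\mathcal D_{\mathrm{no}}$), the number of $x\in\{0,1\}^{\mathbf C}$ such that $S_{\mathbf T}(x)=\{\ell\}$ for some $\ell$ with $\mathbf b_\ell=1$ and $|x|\in[m/2,m/2+0.05\epsilon\sqrt m]$ is at least $\delta\epsilon\cdot 2^m$. Symmetrically, with probability at least $0.01$, the number of such $x$ with $\mathbf b_\ell=0$ instead is at least $\delta\epsilon\cdot 2^m$.
   Context: Parameters: $a=\sqrt n/\epsilon$, $m=n-a$ (assumed integers), $L=0.1\cdot 2^{\sqrt m/\epsilon}$. $\mathbf A\subseteq[n]$ is a uniformly random set of size $a$, $\mathbf C=[n]\setminus\mathbf A$; $\mathbf T=(\mathbf T_1,\dots,\mathbf T_L)\sim\mathsf{Talagrand}(m,\epsilon)$ on $\mathbf C$, meaning each $\mathbf T_\ell\subseteq\mathbf C$ is formed independently by $\sqrt m/\epsilon$ independent uniform draws from $\mathbf C$ with replacement; $\mathbf b\in\{0,1\}^L$ is uniform and independent. For $y\in\{0,1\}^{\mathbf C}$, $S_{\mathbf T}(y)=\{\ell\in[L]: y_j=1\ \forall j\in\mathbf T_\ell\}$, and $|y|$ is the Hamming weight. *)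

theory Defs
  imports "HOL-Probability.Probability"
begin

text \<open>Ground set [n] is rendered as {..<n}. A string y in {0,1}^C is rendered as the
subset Y of C of coordinates equal to 1; then |y| = card Y.
The L sets T_1..T_L are indexed by {..<L}; each T_l is given as the list of its
k = sqrt m / eps independent uniform draws from C (with replacement), so
Talagrand(m,eps) on C is the uniform distribution on L-tuples of length-k lists
over C (uniform on a product = independent uniform coordinates).\<close>

definition talagrand_pmf :: "nat set \<Rightarrow> nat \<Rightarrow> nat \<Rightarrow> (nat \<Rightarrow> nat list) pmf" where
  "talagrand_pmf C k L = pmf_of_set (PiE {..<L} (\<lambda>_. {xs. set xs \<subseteq> C \<and> length xs = k}))"

definition S_T :: "(nat \<Rightarrow> nat list) \<Rightarrow> nat \<Rightarrow> nat set \<Rightarrow> nat set" where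
  "S_T T L Y = {l \<in> {..<L}. set (T l) \<subseteq> Y}"

definition ATb_pmf :: "nat \<Rightarrow> nat \<Rightarrow> nat \<Rightarrow> nat \<Rightarrow>
    (nat set \<times> (nat \<Rightarrow> nat list) \<times> (nat \<Rightarrow> bool)) pmf" where
  "ATb_pmf n a k L =
     do { A \<leftarrow> pmf_of_set {A. A \<subseteq> {..<n} \<and> card A = a};
          T \<leftarrow> talagrand_pmf ({..<n} - A) k L;
          b \<leftarrow> pmf_of_set (PiE {..<L} (\<lambda>_. UNIV :: bool set));
          return_pmf (A, T, b) }"

definition good_count ::
  "nat \<Rightarrow> nat \<Rightarrow> real \<Rightarrow> nat \<Rightarrow> nat set \<Rightarrow> (nat \<Rightarrow> nat list) \<Rightarrow> (nat \<Rightarrow> bool) \<Rightarrow> bool \<Rightarrow> nat" where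
  "good_count n m eps L A T b beta =
     card {Y. Y \<subseteq> {..<n} - A \<and> (\<exists>l. S_T T L Y = {l} \<and> b l = beta)
            \<and> real m / 2 \<le> real (card Y)
            \<and> real (card Y) \<le> real m / 2 + 0.05 * eps * sqrt (real m)}"

end

theory Submission
  imports Defs
begin

text \<open>
  Fix A, so that C has m elements, and put h = 0.05 eps sqrt m.  For a set Y \<subseteq> C of size
  w \<in> [m/2, m/2 + h], each T_l lies inside Y with probability q = (w/m)^k, and
  2^-k \<le> q \<le> 6/5 * 2^-k because 2 h k = m/10.  As L is about 2^k/10, S_T(Y) is a
  singleton with probability L q (1 - q)^(L-1) \<ge> 2/25, and the bit of b at that index is beta
  with probability 1/2.  A lower bound for the central binomial coefficient puts at least
  h 2^m / (16 sqrt m) = eps 2^m / 320 sets Y into the size window, and double counting turns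
  "every Y in the window is good for 1/25 of all (T, b)" into
  "1/100 of all (T, b) are good for eps 2^m / 20000 sets Y".
\<close>

section \<open>Binomial coefficients near the middle\<close>

lemma central_binomial_Suc:
  "Suc r * (2 * Suc r choose Suc r) = 2 * (2 * r + 1) * (2 * r choose r)"
proof -
  have "Suc r * (2 * Suc r choose Suc r) = 2 * (Suc r * (Suc (2 * r) choose r))"
    using Suc_times_binomial[of r "Suc (2 * r)"] by simp
  also have "Suc (2 * r) choose r = Suc (2 * r) choose Suc r"
    using central_binomial_odd[of "Suc (2 * r)"] by simp
  also have "Suc r * (Suc (2 * r) choose Suc r) = Suc (2 * r) * (2 * r choose r)"
    by (rule Suc_times_binomial)
  finally show ?thesis by simp
qed

lemma central_binomial_squared_lower_bound:
  "(16::real) ^ r \<le> real (2 * r choose r) ^ 2 * (4 * real r + 1)"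
proof (induction r)
  case 0
  then show ?case by simp
next
  case (Suc r)
  define x where "x = real r"
  define X where "X = real (2 * r choose r)"
  define Y where "Y = real (2 * Suc r choose Suc r)"
  have rec: "(x + 1) * Y = 2 * (2 * x + 1) * X"
    using arg_cong[OF central_binomial_Suc[of r], of real] unfolding x_def X_def Y_def
    by (simp del: binomial_Suc_Suc add: algebra_simps)
  have "(x + 1) ^ 2 * (Y ^ 2 * (4 * x + 5)) = 4 * (2 * x + 1) ^ 2 * (4 * x + 5) * X ^ 2"
    using arg_cong[OF rec, of "\<lambda>z. z ^ 2 * (4 * x + 5)"]
    by (simp add: power_mult_distrib power2_eq_square algebra_simps)
  \<comment> \<open>\<open>(2r + 1)\<^sup>2 (4r + 5) - 4 (r + 1)\<^sup>2 (4r + 1) = 1\<close>\<close>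
  also have "\<dots> \<ge> 16 * (x + 1) ^ 2 * (4 * x + 1) * X ^ 2"
    by (intro mult_right_mono) (simp_all add: x_def power2_eq_square algebra_simps)
  also have "16 * (x + 1) ^ 2 * (4 * x + 1) * X ^ 2 \<ge> (x + 1) ^ 2 * 16 ^ Suc r"
    using mult_left_mono[OF Suc.IH, of "16 * (x + 1) ^ 2"] unfolding x_def X_def
    by (simp add: algebra_simps)
  finally have "(x + 1) ^ 2 * 16 ^ Suc r \<le> (x + 1) ^ 2 * (Y ^ 2 * (4 * x + 5))" by linarith
  then have "16 ^ Suc r \<le> Y ^ 2 * (4 * x + 5)"
    by (rule mult_left_le_imp_le) (simp add: x_def)
  then show ?case unfolding x_def Y_def by (simp add: algebra_simps del: binomial_Suc_Suc)
qed

lemma binomial_middle_lower_bound: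
  assumes "m \<ge> 1"
  shows "(2::real) ^ m \<le> real (m choose ((m + 1) div 2)) * (4 * sqrt m)"
proof -
  have "((2::real) ^ m) ^ 2 = 4 ^ m"
    by (simp add: power2_eq_square flip: power_mult_distrib)
  also have "\<dots> \<le> real (m choose ((m + 1) div 2)) ^ 2 * (16 * m)"
  proof (cases "even m")
    case True
    then obtain r where m: "m = 2 * r" by blast
    have "(4::real) ^ m = 16 ^ r" by (simp add: m power_mult)
    also have "\<dots> \<le> real (2 * r choose r) ^ 2 * (4 * real r + 1)"
      by (rule central_binomial_squared_lower_bound)
    also have "\<dots> \<le> real (2 * r choose r) ^ 2 * (16 * m)"
      using assms m by (intro mult_left_mono) simp_all
    finally show ?thesis by (simp add: m)
  next
    case False
    then obtain r where m: "m = 2 * r + 1" using oddE by blast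
    have mid: "(m + 1) div 2 = Suc r" by (simp add: m)
    have "2 * r choose r \<le> m choose Suc r" by (simp add: m)
    then have sq: "real (2 * r choose r) ^ 2 \<le> real (m choose Suc r) ^ 2"
      by (intro power_mono) simp_all
    have "(4::real) ^ m = 4 * 16 ^ r" by (simp add: m power_mult)
    also have "\<dots> \<le> real (2 * r choose r) ^ 2 * (4 * (4 * real r + 1))"
      using central_binomial_squared_lower_bound[of r] by (simp add: algebra_simps)
    also have "\<dots> \<le> real (m choose Suc r) ^ 2 * (4 * (4 * real r + 1))"
      using sq by (rule mult_right_mono) simp
    also have "\<dots> \<le> real (m choose Suc r) ^ 2 * (16 * m)"
      by (intro mult_left_mono) (simp_all add: m)
    finally show ?thesis unfolding mid .
  qed
  also have "\<dots> = (real (m choose ((m + 1) div 2)) * (4 * sqrt m)) ^ 2"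
    by (simp add: power_mult_distrib)
  finally show ?thesis
    by (rule power2_le_imp_le) simp
qed

lemma binomial_Suc_lower_bound:
  fixes m c s j :: nat
  assumes "2 * c \<le> m + 1" "4 * s \<le> m" "j < c + s"
  shows "real (m choose j) * (1 - 4 * s / m) \<le> real (m choose Suc j)"
proof -
  have "j < m" using assms by linarith
  have "Suc j * (m choose Suc j) = (m - j) * (m choose j)"
    by (metis binomial_absorption binomial_absorb_comp)
  from arg_cong[OF this, of real]
  have absorb: "real (m choose Suc j) * (real j + 1) = (real m - real j) * real (m choose j)"
    using \<open>j < m\<close> by (simp add: of_nat_diff algebra_simps)
  have "2 * (real j + 1) \<le> real m + 1 + 2 * real s" "4 * real s \<le> real m"
    using assms by simp_all
  then have "(real m - 2 * s) * (2 * (real j + 1)) \<le> (real m - 2 * s) * (real m + 1 + 2 * real s)"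
    by (intro mult_left_mono) simp_all
  \<comment> \<open>\<open>(m - 2s)(m + 1 + 2s) = m(m + 1) - 2s - 4s\<^sup>2\<close>\<close>
  then have key: "(real m - 4 * s) * (real j + 1) \<le> real m * (real m - real j)"
    by (simp add: algebra_simps) (smt (verit) mult_nonneg_nonneg of_nat_0_le_iff)
  have "real (m choose j) * (1 - 4 * s / m) * (real j + 1)
      = real (m choose j) * ((real m - 4 * s) * (real j + 1)) / m"
    using \<open>j < m\<close> by (simp add: field_simps)
  also have "\<dots> \<le> real (m choose j) * (real m * (real m - real j)) / m"
    using key by (intro divide_right_mono mult_left_mono) simp_all
  also have "\<dots> = (real m - real j) * real (m choose j)"
    using \<open>j < m\<close> by simp
  also have "\<dots> = real (m choose Suc j) * (real j + 1)"
    by (rule absorb[symmetric])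
  finally show ?thesis by (rule mult_right_le_imp_le) simp
qed

lemma binomial_decay_above_middle:
  fixes m c s i :: nat
  assumes "2 * c \<le> m + 1" "4 * s \<le> m" "i \<le> s"
  shows "real (m choose c) * (1 - 4 * s / m) ^ i \<le> real (m choose (c + i))"
  using \<open>i \<le> s\<close>
proof (induction i)
  case 0
  then show ?case by simp
next
  case (Suc i)
  have "0 \<le> 1 - 4 * real s / m"
    using assms(2) Suc.prems by (simp add: field_simps)
  then have "real (m choose c) * (1 - 4 * s / m) ^ Suc i \<le> real (m choose (c + i)) * (1 - 4 * s / m)"
    using Suc by (simp only: power_Suc2 mult.assoc[symmetric]) (simp add: mult_right_mono)
  also have "\<dots> \<le> real (m choose (c + Suc i))"
    using binomial_Suc_lower_bound[OF assms(1,2), of "c + i"] Suc.prems by simp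
  finally show ?case .
qed

lemma binomial_near_middle_ge_half:
  fixes m c s i :: nat
  assumes "2 * c \<le> m + 1" "8 * real s ^ 2 \<le> m" "i < s"
  shows "real (m choose c) / 2 \<le> real (m choose (c + i))"
proof -
  have "1 \<le> real s"
    using assms(3) by simp
  then have "real s \<le> real s ^ 2"
    using power_increasing[of 1 2 "real s"] by simp
  then have "4 * real s \<le> m" "1 \<le> real m"
    using assms(2) \<open>1 \<le> real s\<close> by linarith+
  then have "m \<ge> 1" by simp
  let ?q = "1 - 4 * real s / m"
  have q: "0 \<le> ?q" "?q \<le> 1"
    using \<open>4 * real s \<le> m\<close> \<open>m \<ge> 1\<close> by (simp_all add: field_simps)
  have "1 / 2 \<le> 1 + real s * (- (4 * real s / m))"
    using assms(2) \<open>m \<ge> 1\<close> by (simp add: field_simps power2_eq_square)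
  also have "\<dots> \<le> ?q ^ s"
    using Bernoulli_inequality[of "- (4 * real s / m)" s] q by simp
  also have "\<dots> \<le> ?q ^ i"
    using q assms(3) by (intro power_decreasing) simp_all
  finally have "real (m choose c) * (1 / 2) \<le> real (m choose c) * ?q ^ i"
    by (intro mult_left_mono) simp_all
  also have "\<dots> \<le> real (m choose (c + i))"
    using binomial_decay_above_middle[OF assms(1)] \<open>4 * real s \<le> m\<close> assms(3) by simp
  finally show ?thesis by simp
qed

text \<open>The \<open>\<lfloor>h\<rfloor>\<close> layers just above the middle each contain at least half as many sets as the middle one.\<close>

lemma card_subsets_near_half_lower_bound:
  fixes C :: "'a set" and h :: real
  assumes "finite C" "card C = m" "1 \<le> h" "8 * h ^ 2 \<le> m"
  shows "h * 2 ^ m / (16 * sqrt m)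
           \<le> card {Y. Y \<subseteq> C \<and> real m / 2 \<le> card Y \<and> card Y \<le> real m / 2 + h}"
proof -
  define c where "c = (m + 1) div 2"
  define s where "s = nat \<lfloor>h\<rfloor>"
  have "real s = of_int \<lfloor>h\<rfloor>"
    using assms(3) unfolding s_def by simp
  moreover have "1 \<le> \<lfloor>h\<rfloor>"
    using assms(3) by (simp add: le_floor_iff)
  ultimately have s: "real s \<le> h" "h < real s + 1" "1 \<le> real s"
    by linarith+
  have "8 * real s ^ 2 \<le> m"
    using s assms(4) power_mono[of "real s" h 2] by linarith
  have "m \<ge> 1" "real m \<le> 2 * real c" "2 * real c \<le> real m + 1"
    using \<open>8 * real s ^ 2 \<le> m\<close> s(3) one_le_power[of "real s" 2] unfolding c_def by linarith+
  let ?W = "{Y. Y \<subseteq> C \<and> real m / 2 \<le> card Y \<and> card Y \<le> real m / 2 + h}"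
  let ?layer = "\<lambda>i. {Y. Y \<subseteq> C \<and> card Y = c + i}"
  have "(\<Union>i<s. ?layer i) \<subseteq> ?W"
    using s \<open>real m \<le> 2 * real c\<close> \<open>2 * real c \<le> real m + 1\<close> by auto
  have "h * 2 ^ m / (16 * sqrt m) \<le> h * (real (m choose c) * (4 * sqrt m)) / (16 * sqrt m)"
    using binomial_middle_lower_bound[OF \<open>m \<ge> 1\<close>] assms(3) unfolding c_def
    by (intro divide_right_mono mult_left_mono) simp_all
  also have "\<dots> = h / 2 * (real (m choose c) / 2)"
    using \<open>m \<ge> 1\<close> by (simp add: field_simps)
  also have "\<dots> \<le> real s * (real (m choose c) / 2)"
    using s by (intro mult_right_mono) simp_all
  also have "\<dots> = (\<Sum>i<s. real (m choose c) / 2)"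
    by simp
  also have "\<dots> \<le> (\<Sum>i<s. real (m choose (c + i)))"
    using binomial_near_middle_ge_half[OF _ \<open>8 * real s ^ 2 \<le> m\<close>, of c] c_def
    by (intro sum_mono) simp
  also have "\<dots> = (\<Sum>i<s. real (card (?layer i)))"
    using assms(1,2) by (simp add: n_subsets)
  also have "\<dots> = card (\<Union>i<s. ?layer i)"
    by (subst card_UN_disjoint) (auto simp: assms(1))
  also have "\<dots> \<le> card ?W"
    using \<open>(\<Union>i<s. ?layer i) \<subseteq> ?W\<close> assms(1) by (simp add: card_mono)
  finally show ?thesis .
qed

section \<open>Counting families with a unique hit\<close>

lemma card_PiE_if_eq:
  assumes "finite I" "l \<in> I"
  shows "card (PiE I (\<lambda>i. if i = l then A else B)) = card A * card B ^ (card I - 1)"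
  using assms by (simp add: card_PiE if_distrib prod_gen_delta)

lemma PiE_filter_single:
  assumes "l \<in> I"
  shows "{f \<in> PiE I (\<lambda>_. B). f l \<in> A} = PiE I (\<lambda>i. if i = l then A \<inter> B else B)"
proof (intro set_eqI iffI)
  fix f assume "f \<in> {f \<in> PiE I (\<lambda>_. B). f l \<in> A}"
  then show "f \<in> PiE I (\<lambda>i. if i = l then A \<inter> B else B)"
    by (auto simp: PiE_iff)
next
  fix f assume f: "f \<in> PiE I (\<lambda>i. if i = l then A \<inter> B else B)"
  then have "f i \<in> B" if "i \<in> I" for i
    using that by (cases "i = l") (auto dest: PiE_mem)
  then show "f \<in> {f \<in> PiE I (\<lambda>_. B). f l \<in> A}"
    using f assms PiE_mem[OF f assms] by (auto simp: PiE_iff)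
qed

lemma S_T_eq_singleton_iff:
  assumes "T \<in> PiE {..<L} (\<lambda>_. B)"
  shows "S_T T L Y = {l} \<longleftrightarrow>
    l < L \<and> T \<in> PiE {..<L} (\<lambda>i. if i = l then {xs \<in> B. set xs \<subseteq> Y} else {xs \<in> B. \<not> set xs \<subseteq> Y})"
  using assms unfolding S_T_def by (auto simp: PiE_iff split: if_splits)

lemma card_S_T_eq_singleton:
  assumes "l < L"
  shows "card {T \<in> PiE {..<L} (\<lambda>_. B). S_T T L Y = {l}}
       = card {xs \<in> B. set xs \<subseteq> Y} * card {xs \<in> B. \<not> set xs \<subseteq> Y} ^ (L - 1)"
proof -
  let ?P = "PiE {..<L} (\<lambda>i. if i = l then {xs \<in> B. set xs \<subseteq> Y} else {xs \<in> B. \<not> set xs \<subseteq> Y})"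
  have "?P \<subseteq> PiE {..<L} (\<lambda>_. B)"
    by (rule PiE_mono) auto
  have "{T \<in> PiE {..<L} (\<lambda>_. B). S_T T L Y = {l}} = ?P"
  proof (intro set_eqI)
    fix T
    show "T \<in> {T \<in> PiE {..<L} (\<lambda>_. B). S_T T L Y = {l}} \<longleftrightarrow> T \<in> ?P"
    proof (cases "T \<in> PiE {..<L} (\<lambda>_. B)")
      case True
      then show ?thesis using S_T_eq_singleton_iff[OF True, of Y l] assms by simp
    next
      case False
      then show ?thesis using \<open>?P \<subseteq> PiE {..<L} (\<lambda>_. B)\<close> by blast
    qed
  qed
  then show ?thesis using assms by (simp add: card_PiE_if_eq)
qed

lemma card_bool_PiE_fixed:
  assumes "l < L"
  shows "card {b \<in> PiE {..<L} (\<lambda>_. UNIV :: bool set). b l = beta} = 2 ^ (L - 1)"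
proof -
  have "{b \<in> PiE {..<L} (\<lambda>_. UNIV :: bool set). b l = beta}
      = PiE {..<L} (\<lambda>i. if i = l then {beta} \<inter> UNIV else UNIV)"
    using PiE_filter_single[of l "{..<L}" UNIV "{beta}"] assms by simp
  then show ?thesis using assms by (simp add: card_PiE_if_eq)
qed

lemma card_pairs_unique_index:
  assumes "finite X" "finite Z" "finite I" "\<And>x. F x \<subseteq> I"
  shows "card {(x, z) \<in> X \<times> Z. \<exists>l. F x = {l} \<and> P l z}
       = (\<Sum>l\<in>I. card {x \<in> X. F x = {l}} * card {z \<in> Z. P l z})"
proof -
  have "{(x, z) \<in> X \<times> Z. \<exists>l. F x = {l} \<and> P l z} = (\<Union>l\<in>I. {x \<in> X. F x = {l}} \<times> {z \<in> Z. P l z})"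
    using assms(4) by blast
  also have "card \<dots> = (\<Sum>l\<in>I. card ({x \<in> X. F x = {l}} \<times> {z \<in> Z. P l z}))"
    using assms(1-3) by (intro card_UN_disjoint) auto
  finally show ?thesis by (simp add: card_cartesian_product)
qed

lemma card_unique_hit:
  fixes C Y :: "nat set" and beta :: bool
  assumes "finite C" "Y \<subseteq> C"
  shows "card {(T, b) \<in> PiE {..<L} (\<lambda>_. {xs. set xs \<subseteq> C \<and> length xs = k}) \<times> PiE {..<L} (\<lambda>_. UNIV).
                 \<exists>l. S_T T L Y = {l} \<and> b l = beta}
       = L * (card Y ^ k * (card C ^ k - card Y ^ k) ^ (L - 1)) * 2 ^ (L - 1)"
proof -
  define Lists where "Lists = {xs. set xs \<subseteq> C \<and> length xs = k}"
  have "finite Lists"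
    using assms(1) unfolding Lists_def by (simp add: finite_lists_length_eq)
  have "{xs \<in> Lists. set xs \<subseteq> Y} = {xs. set xs \<subseteq> Y \<and> length xs = k}"
    using assms(2) unfolding Lists_def by auto
  then have hit: "card {xs \<in> Lists. set xs \<subseteq> Y} = card Y ^ k"
    using assms by (simp add: card_lists_length_eq finite_subset)
  have "card {xs \<in> Lists. \<not> set xs \<subseteq> Y} = card Lists - card {xs \<in> Lists. set xs \<subseteq> Y}"
    using \<open>finite Lists\<close> by (subst card_Diff_subset[symmetric]) (auto intro: arg_cong[of _ _ card])
  then have miss: "card {xs \<in> Lists. \<not> set xs \<subseteq> Y} = card C ^ k - card Y ^ k"
    using assms(1) hit unfolding Lists_def by (simp add: card_lists_length_eq)
  have "card {(T, b) \<in> PiE {..<L} (\<lambda>_. Lists) \<times> PiE {..<L} (\<lambda>_. UNIV). \<exists>l. S_T T L Y = {l} \<and> b l = beta}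
      = (\<Sum>l<L. card {T \<in> PiE {..<L} (\<lambda>_. Lists). S_T T L Y = {l}}
                 * card {b \<in> PiE {..<L} (\<lambda>_. UNIV :: bool set). b l = beta})"
    using \<open>finite Lists\<close> by (intro card_pairs_unique_index) (auto simp: S_T_def finite_PiE)
  also have "\<dots> = (\<Sum>l<L. card Y ^ k * (card C ^ k - card Y ^ k) ^ (L - 1) * 2 ^ (L - 1))"
    by (intro sum.cong) (simp_all add: card_S_T_eq_singleton card_bool_PiE_fixed hit miss)
  finally show ?thesis unfolding Lists_def by simp
qed

section \<open>A fixed set is hit exactly once\<close>

lemma exactly_one_success_lower_bound:
  fixes q :: real
  assumes "0 \<le> q" "q \<le> 1"
  shows "real L * q * (1 - real L * q) \<le> real L * q * (1 - q) ^ (L - 1)"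
proof (intro mult_left_mono)
  have "1 - real L * q \<le> 1 + real (L - 1) * (- q)"
    using assms(1) by (cases L) (simp_all add: algebra_simps)
  also have "\<dots> \<le> (1 - q) ^ (L - 1)"
    using Bernoulli_inequality[of "- q" "L - 1"] assms(2) by simp
  finally show "1 - real L * q \<le> (1 - q) ^ (L - 1)" .
qed (use assms(1) in simp)

lemma power_ratio_near_half:
  fixes m w k :: nat and h :: real
  assumes "m > 0" "real m / 2 \<le> w" "w \<le> real m / 2 + h" "2 * h * k \<le> real m / 10"
  shows "(1 / 2) ^ k \<le> (w / m) ^ k" "(w / m) ^ k \<le> 6 / 5 * (1 / 2) ^ k"
proof -
  show "(1 / 2) ^ k \<le> (w / m) ^ k"
    using assms(1,2) by (intro power_mono) (simp_all add: field_simps)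
  have "0 \<le> h" using assms(2,3) by simp
  have "(w / m) ^ k \<le> (1 / 2 * (1 + 2 * h / m)) ^ k"
    using assms(1,3) by (intro power_mono) (simp_all add: field_simps)
  also have "\<dots> = (1 / 2) ^ k * (1 + 2 * h / m) ^ k"
    by (rule power_mult_distrib)
  also have "(1 + 2 * h / m) ^ k \<le> exp (2 * h / m) ^ k"
    using \<open>0 \<le> h\<close> by (intro power_mono exp_ge_add_one_self) simp
  also have "\<dots> = exp (real k * (2 * h / m))"
    by (rule exp_of_nat_mult[symmetric])
  also have "\<dots> \<le> exp (1 / 10)"
    using assms(1,4) by (simp add: field_simps)
  also have "\<dots> \<le> 6 / 5"
    using exp_bound_lemma[of "1 / 10 :: real"] by simp
  finally show "(w / m) ^ k \<le> 6 / 5 * (1 / 2) ^ k"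
    by (simp add: mult_left_mono mult.commute)
qed

lemma unique_success_probability_lower_bound:
  fixes q :: real and L k :: nat
  assumes "(1 / 2) ^ k \<le> q" "q \<le> 6 / 5 * (1 / 2) ^ k" "10 \<le> k"
    and "2 ^ k / 10 - 1 \<le> real L" "real L \<le> 2 ^ k / 10"
  shows "2 / 25 \<le> real L * q * (1 - q) ^ (L - 1)"
proof -
  have inv: "(2::real) ^ k * (1 / 2) ^ k = 1"
    by (simp add: power_mult_distrib[symmetric])
  have "(1 / 2 :: real) ^ k \<le> (1 / 2) ^ 10"
    using assms(3) by (intro power_decreasing) simp_all
  also have "\<dots> = 1 / 1024" by (simp add: power_divide)
  finally have small: "(1 / 2 :: real) ^ k \<le> 1 / 1024" .
  have "0 \<le> q" using assms(1) zero_le_power[of "1 / 2 :: real" k] by linarith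
  have upper: "real L * q \<le> 3 / 25"
  proof -
    have "real L * q \<le> 2 ^ k / 10 * (6 / 5 * (1 / 2) ^ k)"
      using assms(2,5) \<open>0 \<le> q\<close> by (intro mult_mono) simp_all
    then show ?thesis using inv by (simp add: algebra_simps)
  qed
  have lower: "1 / 10 - 1 / 1024 \<le> real L * q"
  proof -
    have "(2 ^ k / 10 - 1) * (1 / 2) ^ k \<le> real L * q"
      using assms(1,4) \<open>0 \<le> q\<close> by (intro mult_mono) simp_all
    then show ?thesis using inv small by (simp add: algebra_simps)
  qed
  have "q \<le> 1" using assms(2) small by linarith
  have "2 / 25 \<le> (1 / 10 - 1 / 1024) * (1 - 3 / 25 :: real)" by simp
  also have "\<dots> \<le> real L * q * (1 - real L * q)"
    using upper lower by (intro mult_mono) simp_all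
  also have "\<dots> \<le> real L * q * (1 - q) ^ (L - 1)"
    using \<open>0 \<le> q\<close> \<open>q \<le> 1\<close> by (rule exactly_one_success_lower_bound)
  finally show ?thesis .
qed

lemma unique_hit_fraction_lower_bound:
  fixes C Y :: "nat set" and h :: real and m k L :: nat and beta :: bool
  assumes "finite C" "card C = m" "m > 0" "Y \<subseteq> C"
    and "real m / 2 \<le> card Y" "card Y \<le> real m / 2 + h" "2 * h * k \<le> real m / 10"
    and "10 \<le> k" "2 ^ k / 10 - 1 \<le> real L" "real L \<le> 2 ^ k / 10"
  defines "\<Omega> \<equiv> PiE {..<L} (\<lambda>_. {xs. set xs \<subseteq> C \<and> length xs = k}) \<times> PiE {..<L} (\<lambda>_. UNIV :: bool set)"
  shows "card \<Omega> / 25 \<le> card {(T, b) \<in> \<Omega>. \<exists>l. S_T T L Y = {l} \<and> b l = beta}"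
proof -
  define w where "w = card Y"
  define q where "q = (w / m) ^ k"
  define M where "M = real m ^ k"
  have "w \<le> m" using assms(1,2,4) unfolding w_def by (metis card_mono)
  have "(2::real) ^ 10 \<le> 2 ^ k" using assms(8) by (intro power_increasing) simp_all
  then have "L \<ge> 1" using assms(9) by simp
  have "2 / 25 \<le> real L * q * (1 - q) ^ (L - 1)"
    using power_ratio_near_half[OF assms(3,5,6,7)] assms(8-10) unfolding q_def w_def
    by (intro unique_success_probability_lower_bound) simp_all
  have "M > 0" using assms(3) unfolding M_def by simp
  have wk: "real (w ^ k) = q * M" and mk: "real (m ^ k - w ^ k) = (1 - q) * M"
    using assms(3) \<open>w \<le> m\<close> power_mono[of w m k]
    by (simp_all add: q_def M_def power_divide of_nat_diff algebra_simps)
  have "card \<Omega> = (m ^ k) ^ L * 2 ^ L"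
    using assms(1,2) unfolding \<Omega>_def by (simp add: card_cartesian_product card_PiE card_lists_length_eq)
  then have "card \<Omega> / 25 = 2 / 25 * (M ^ L * 2 ^ (L - 1))"
    using \<open>L \<ge> 1\<close> unfolding M_def by (cases L) (simp_all add: power_mult)
  also have "\<dots> \<le> real L * q * (1 - q) ^ (L - 1) * (M ^ L * 2 ^ (L - 1))"
    using \<open>2 / 25 \<le> _\<close> \<open>M > 0\<close> by (intro mult_right_mono) simp_all
  also have "\<dots> = real L * (q * M) * ((1 - q) * M) ^ (L - 1) * 2 ^ (L - 1)"
  proof -
    have "M ^ L = M * M ^ (L - 1)" using \<open>L \<ge> 1\<close> by (cases L) simp_all
    then show ?thesis by (simp add: power_mult_distrib mult_ac)
  qed
  also have "\<dots> = real (L * (w ^ k * (m ^ k - w ^ k) ^ (L - 1)) * 2 ^ (L - 1))"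
    unfolding of_nat_mult of_nat_power[of "m ^ k - w ^ k"] wk mk by simp
  also have "\<dots> = card {(T, b) \<in> \<Omega>. \<exists>l. S_T T L Y = {l} \<and> b l = beta}"
    unfolding \<Omega>_def w_def using card_unique_hit[OF assms(1,4)] assms(2) by simp
  finally show ?thesis .
qed

section \<open>Averaging\<close>

lemma sum_card_filter_swap:
  assumes "finite A" "finite B"
  shows "(\<Sum>a\<in>A. card {b \<in> B. P a b}) = (\<Sum>b\<in>B. card {a \<in> A. P a b})"
proof -
  have "(\<Sum>a\<in>A. card {b \<in> B. P a b}) = (\<Sum>a\<in>A. \<Sum>b\<in>B. of_bool (P a b))"
    using assms by (simp add: Collect_conj_eq Int_commute)
  also have "\<dots> = (\<Sum>b\<in>B. \<Sum>a\<in>A. of_bool (P a b))"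
    by (rule sum.swap)
  also have "\<dots> = (\<Sum>b\<in>B. card {a \<in> A. P a b})"
    using assms by (simp add: Collect_conj_eq Int_commute)
  finally show ?thesis .
qed

lemma card_many_partners_lower_bound:
  fixes \<Omega> :: "'w set" and W :: "'y set" and P :: "'y \<Rightarrow> 'w \<Rightarrow> bool" and \<theta> p r :: real
  assumes "finite \<Omega>" "finite W" "W \<noteq> {}"
    and partners: "\<And>y. y \<in> W \<Longrightarrow> p * card \<Omega> \<le> card {w \<in> \<Omega>. P y w}"
    and "0 \<le> \<theta>" "\<theta> \<le> (p - r) * card W"
  shows "r * card \<Omega> \<le> card {w \<in> \<Omega>. \<theta> \<le> card {y \<in> W. P y w}}"
proof -
  define X where "X w = real (card {y \<in> W. P y w})" for w
  define G where "G = {w \<in> \<Omega>. \<theta> \<le> X w}"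
  have "card W * (p * card \<Omega>) \<le> (\<Sum>y\<in>W. real (card {w \<in> \<Omega>. P y w}))"
    using sum_mono[of W "\<lambda>_. p * card \<Omega>", OF partners] by simp
  also have "\<dots> = (\<Sum>w\<in>\<Omega>. X w)"
    unfolding X_def using sum_card_filter_swap[OF assms(2,1), of P] by (simp flip: of_nat_sum)
  also have "\<dots> \<le> (\<Sum>w\<in>\<Omega>. if w \<in> G then real (card W) else \<theta>)"
  proof (rule sum_mono)
    fix w assume "w \<in> \<Omega>"
    have "X w \<le> card W"
      unfolding X_def using assms(2) by (simp add: card_mono)
    then show "X w \<le> (if w \<in> G then real (card W) else \<theta>)"
      using \<open>w \<in> \<Omega>\<close> unfolding G_def by auto
  qed
  also have "\<dots> \<le> card G * card W + card \<Omega> * \<theta>"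
  proof -
    have "G \<subseteq> \<Omega>" unfolding G_def by auto
    then have "(\<Sum>w\<in>\<Omega>. if w \<in> G then real (card W) else \<theta>) = card G * card W + card (\<Omega> - G) * \<theta>"
      using assms(1) by (simp add: sum.If_cases Int_absorb1 Diff_eq[symmetric])
    moreover have "card (\<Omega> - G) \<le> card \<Omega>"
      using assms(1) by (simp add: card_mono)
    ultimately show ?thesis
      using \<open>0 \<le> \<theta>\<close> by (simp add: mult_right_mono)
  qed
  also have "\<dots> \<le> card G * card W + card \<Omega> * ((p - r) * card W)"
    using assms(6) by (simp add: mult_left_mono)
  finally have "card W * (r * card \<Omega>) \<le> card W * card G"
    by (simp add: algebra_simps)
  then show ?thesis
    using assms(2,3) unfolding G_def X_def by (simp add: card_gt_0_iff)
qed

lemma prob_bind_pmf_lower_bound: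
  assumes "\<And>x. x \<in> set_pmf p \<Longrightarrow> c \<le> measure_pmf.prob (f x) E"
  shows "c \<le> measure_pmf.prob (bind_pmf p f) E"
proof (cases "0 \<le> c")
  case True
  have "ennreal c = (\<integral>\<^sup>+x. ennreal c \<partial>measure_pmf p)"
    by simp
  also have "\<dots> \<le> (\<integral>\<^sup>+x. emeasure (measure_pmf (f x)) E \<partial>measure_pmf p)"
    using assms by (intro nn_integral_mono_AE AE_pmfI) (simp add: measure_pmf.emeasure_eq_measure)
  also have "\<dots> = emeasure (measure_pmf (bind_pmf p f)) E"
    by (rule emeasure_bind_pmf[symmetric])
  also have "\<dots> = ennreal (measure_pmf.prob (bind_pmf p f) E)"
    by (rule measure_pmf.emeasure_eq_measure)
  finally show ?thesis
    using True by (simp add: ennreal_le_iff)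
qed (simp add: order.trans[OF _ measure_nonneg])

lemma pair_pmf_of_set:
  assumes "finite S" "S \<noteq> {}" "finite R" "R \<noteq> {}"
  shows "pair_pmf (pmf_of_set S) (pmf_of_set R) = pmf_of_set (S \<times> R)"
  by (rule pmf_eqI) (auto simp: assms pmf_pair card_cartesian_product indicator_def)

lemma prob_uniform_pair:
  assumes "finite S" "S \<noteq> {}" "finite R" "R \<noteq> {}"
  shows "measure_pmf.prob (pmf_of_set S \<bind> (\<lambda>x. pmf_of_set R \<bind> (\<lambda>y. return_pmf (g x y)))) E
        = card {(x, y) \<in> S \<times> R. g x y \<in> E} / card (S \<times> R)"
proof -
  have "pmf_of_set S \<bind> (\<lambda>x. pmf_of_set R \<bind> (\<lambda>y. return_pmf (g x y)))
      = map_pmf (case_prod g) (pmf_of_set (S \<times> R))"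
    by (simp add: pair_pmf_of_set[OF assms, symmetric] pair_pmf_def map_bind_pmf)
  moreover have "(S \<times> R) \<inter> case_prod g -` E = {(x, y) \<in> S \<times> R. g x y \<in> E}"
    by auto
  ultimately show ?thesis
    using assms by (simp add: measure_pmf_of_set)
qed

lemma card_many_good_pairs:
  fixes C :: "nat set" and h \<theta> :: real and beta :: bool
  assumes "finite C" "card C = m" "1 \<le> h" "8 * h ^ 2 \<le> m" "2 * h * k \<le> real m / 10"
    and "10 \<le> k" "2 ^ k / 10 - 1 \<le> real L" "real L \<le> 2 ^ k / 10"
    and "0 \<le> \<theta>" "\<theta> \<le> 3 / 100 * (h * 2 ^ m / (16 * sqrt m))"
  defines "\<Omega> \<equiv> PiE {..<L} (\<lambda>_. {xs. set xs \<subseteq> C \<and> length xs = k}) \<times> PiE {..<L} (\<lambda>_. UNIV :: bool set)"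
  shows "card \<Omega> / 100 \<le> card {(T, b) \<in> \<Omega>. \<theta> \<le> card {Y. Y \<subseteq> C \<and> (\<exists>l. S_T T L Y = {l} \<and> b l = beta)
                                \<and> real m / 2 \<le> card Y \<and> card Y \<le> real m / 2 + h}}"
proof -
  define W where "W = {Y. Y \<subseteq> C \<and> real m / 2 \<le> card Y \<and> card Y \<le> real m / 2 + h}"
  define P where "P Y = (\<lambda>(T, b). \<exists>l. S_T T L Y = {l} \<and> b l = beta)" for Y
  have "8 \<le> real m"
    using assms(4) one_le_power[OF assms(3), of 2] by linarith
  then have "m > 0" by simp
  have "finite \<Omega>"
    using assms(1) unfolding \<Omega>_def by (simp add: finite_lists_length_eq finite_PiE)
  have "h * 2 ^ m / (16 * sqrt m) \<le> card W"
    unfolding W_def by (rule card_subsets_near_half_lower_bound[OF assms(1-4)])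
  moreover have "0 < h * 2 ^ m / (16 * sqrt m)"
    using assms(3) \<open>m > 0\<close> by simp
  ultimately have "W \<noteq> {}" "\<theta> \<le> (1 / 25 - 1 / 100) * card W"
    using assms(10) by auto
  moreover have "1 / 25 * card \<Omega> \<le> card {w \<in> \<Omega>. P Y w}" if "Y \<in> W" for Y
  proof -
    have "{w \<in> \<Omega>. P Y w} = {(T, b) \<in> \<Omega>. \<exists>l. S_T T L Y = {l} \<and> b l = beta}"
      unfolding P_def by auto
    then show ?thesis
      using that unique_hit_fraction_lower_bound[OF assms(1,2) \<open>m > 0\<close> _ _ _ assms(5-8)]
      unfolding W_def \<Omega>_def by simp
  qed
  ultimately have "1 / 100 * card \<Omega> \<le> card {w \<in> \<Omega>. \<theta> \<le> card {Y \<in> W. P Y w}}"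
    using \<open>finite \<Omega>\<close> assms(1,9) unfolding W_def
    by (intro card_many_partners_lower_bound[where p = "1 / 25"]) simp_all
  moreover have "{Y \<in> W. P Y (T, b)} = {Y. Y \<subseteq> C \<and> (\<exists>l. S_T T L Y = {l} \<and> b l = beta)
                                \<and> real m / 2 \<le> card Y \<and> card Y \<le> real m / 2 + h}" for T b
    unfolding W_def P_def by auto
  then have "{w \<in> \<Omega>. \<theta> \<le> card {Y \<in> W. P Y w}}
      = {(T, b) \<in> \<Omega>. \<theta> \<le> card {Y. Y \<subseteq> C \<and> (\<exists>l. S_T T L Y = {l} \<and> b l = beta)
                                \<and> real m / 2 \<le> card Y \<and> card Y \<le> real m / 2 + h}}"
    by auto
  ultimately show ?thesis by simp
qed

lemma prob_good_count_given_A: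
  fixes A :: "nat set" and h eps \<theta> :: real and beta :: bool
  assumes "A \<subseteq> {..<n}" "card A = a" "m = n - a"
    and "h = 0.05 * eps * sqrt m" "1 \<le> h" "8 * h ^ 2 \<le> m" "2 * h * k \<le> real m / 10"
    and "10 \<le> k" "2 ^ k / 10 - 1 \<le> real L" "real L \<le> 2 ^ k / 10"
    and "0 \<le> \<theta>" "\<theta> \<le> 3 / 100 * (h * 2 ^ m / (16 * sqrt m))"
  shows "1 / 100 \<le> measure_pmf.prob
           (talagrand_pmf ({..<n} - A) k L \<bind>
              (\<lambda>T. pmf_of_set (PiE {..<L} (\<lambda>_. UNIV)) \<bind> (\<lambda>b. return_pmf (A, T, b))))
           {(A, T, b). \<theta> \<le> good_count n m eps L A T b beta}"
proof -
  define C where "C = {..<n} - A"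
  define Ts where "Ts = PiE {..<L} (\<lambda>_. {xs. set xs \<subseteq> C \<and> length xs = k})"
  define Bs where "Bs = PiE {..<L} (\<lambda>_. UNIV :: bool set)"
  have "finite C" "card C = m"
    using assms(1-3) unfolding C_def by (simp_all add: card_Diff_subset finite_subset)
  moreover have "8 \<le> real m"
    using assms(6) one_le_power[OF assms(5), of 2] by linarith
  ultimately obtain x where "x \<in> C"
    by (metis card.empty ex_in_conv of_nat_0 not_numeral_le_zero)
  then have "replicate k x \<in> {xs. set xs \<subseteq> C \<and> length xs = k}"
    by (simp add: set_replicate_conv_if)
  then have "finite Ts" "Ts \<noteq> {}" "finite Bs" "Bs \<noteq> {}"
    using \<open>finite C\<close> unfolding Ts_def Bs_def
    by (auto simp: PiE_eq_empty_iff finite_lists_length_eq intro!: finite_PiE)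
  moreover have "talagrand_pmf ({..<n} - A) k L = pmf_of_set Ts"
    unfolding talagrand_pmf_def Ts_def C_def ..
  moreover have "card (Ts \<times> Bs) / 100 \<le> card {(T, b) \<in> Ts \<times> Bs. \<theta> \<le> good_count n m eps L A T b beta}"
    using card_many_good_pairs[OF \<open>finite C\<close> \<open>card C = m\<close> assms(5-12), of beta]
    unfolding good_count_def Ts_def Bs_def C_def assms(4) by simp
  ultimately show ?thesis
    using card_gt_0_iff[of Ts] card_gt_0_iff[of Bs]
    by (simp add: prob_uniform_pair Bs_def[symmetric] field_simps)
qed

lemma parameter_bounds:
  fixes eps :: real and n a m k :: nat
  assumes "n \<ge> 1" "100 / sqrt n \<le> eps" "eps < 1"
    and "real a = sqrt n / eps" "m = n - a" "real k = sqrt m / eps"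
  defines "h \<equiv> 0.05 * eps * sqrt m"
  shows "0 < eps" "a \<le> n" "10 \<le> k" "1 \<le> h" "8 * h ^ 2 \<le> m" "2 * h * k = real m / 10"
proof -
  define u where "u = eps * sqrt n"
  \<comment> \<open>then \<open>a = n / u\<close> and \<open>eps\<^sup>2 m = u\<^sup>2 - u\<close>\<close>
  have "0 < 100 / sqrt n" using assms(1) by simp
  then show "0 < eps" using assms(2) by linarith
  then have "100 \<le> u" using assms(1,2) unfolding u_def by (simp add: field_simps)
  have "real a * u = sqrt n / eps * (eps * sqrt n)"
    unfolding assms(4) u_def ..
  also have "\<dots> = n"
    using \<open>0 < eps\<close> by simp
  finally have "real a = n / u"
    using \<open>100 \<le> u\<close> by (simp add: field_simps)
  also have "\<dots> \<le> n"
    using \<open>100 \<le> u\<close> by (simp add: divide_le_eq mult_le_cancel_left1)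
  finally show "a \<le> n" by simp
  have "eps ^ 2 * n = u ^ 2"
    unfolding u_def by (simp add: power_mult_distrib)
  have "eps ^ 2 * m = eps ^ 2 * n - eps ^ 2 * n / u"
    using \<open>a \<le> n\<close> \<open>real a = n / u\<close> assms(5) by (simp add: of_nat_diff right_diff_distrib)
  also have "\<dots> = u ^ 2 - u"
    using \<open>eps ^ 2 * n = u ^ 2\<close> \<open>100 \<le> u\<close> by (simp add: power2_eq_square)
  also have "9900 \<le> u ^ 2 - u"
    using \<open>100 \<le> u\<close> mult_mono[of 100 u 99 "u - 1"] by (simp add: power2_eq_square algebra_simps)
  finally have "9900 \<le> eps ^ 2 * m" .
  moreover have "eps ^ 2 * m \<le> m"
    using \<open>0 < eps\<close> assms(3) by (simp add: mult_left_le_one_le power_le_one)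
  moreover have "400 * h ^ 2 = eps ^ 2 * m"
    unfolding h_def by (simp add: power_mult_distrib power_divide)
  ultimately have "9801 \<le> real m" "1 \<le> h ^ 2" "8 * h ^ 2 \<le> m"
    by linarith+
  then show "8 * h ^ 2 \<le> m" by simp
  have "0 \<le> h"
    using \<open>0 < eps\<close> unfolding h_def by simp
  with \<open>1 \<le> h ^ 2\<close> show "1 \<le> h"
    using power2_le_imp_le[of 1 h] by simp
  show "2 * h * k = real m / 10"
    using \<open>0 < eps\<close> unfolding h_def assms(6) by simp
  have "99 \<le> sqrt m"
    using real_le_rsqrt[of 99 "real m"] \<open>9801 \<le> real m\<close> by simp
  also have "sqrt m = eps * real k"
    using assms(6) \<open>0 < eps\<close> by (simp add: field_simps)
  also have "\<dots> \<le> real k"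
    using assms(3) \<open>0 < eps\<close> by (simp add: mult_left_le_one_le)
  finally show "10 \<le> k" by simp
qed

lemma prob_good_count_lower_bound:
  fixes eps :: real and n a m k L :: nat and beta :: bool
  assumes "n \<ge> 1" "100 / sqrt n \<le> eps" "eps < 1"
    and "real a = sqrt n / eps" "m = n - a" "real k = sqrt m / eps"
    and "L = nat \<lfloor>0.1 * 2 powr real k\<rfloor>"
  shows "0.01 \<le> measure_pmf.prob (ATb_pmf n a k L)
                  {(A, T, b). 1 / 20000 * eps * 2 ^ m \<le> good_count n m eps L A T b beta}"
proof -
  define h where "h = 0.05 * eps * sqrt m"
  note params = parameter_bounds[OF assms(1-6), folded h_def]
  have "real L = of_int \<lfloor>2 ^ k / 10 :: real\<rfloor>"
    unfolding assms(7) by (simp add: powr_realpow)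
  then have L_bounds: "2 ^ k / 10 - 1 \<le> real L" "real L \<le> 2 ^ k / 10"
    by linarith+
  have "0 < m" using params(5,4) one_le_power[of h 2] by (cases m) simp_all
  then have "h * 2 ^ m / (16 * sqrt m) = eps * 2 ^ m / 320"
    unfolding h_def by simp
  moreover have "0 \<le> eps * 2 ^ m"
    using params(1) by simp
  ultimately have "1 / 20000 * eps * 2 ^ m \<le> 3 / 100 * (h * 2 ^ m / (16 * sqrt m))"
    by simp
  then have given_A: "1 / 100 \<le> measure_pmf.prob
           (talagrand_pmf ({..<n} - A) k L \<bind>
              (\<lambda>T. pmf_of_set (PiE {..<L} (\<lambda>_. UNIV)) \<bind> (\<lambda>b. return_pmf (A, T, b))))
           {(A, T, b). 1 / 20000 * eps * 2 ^ m \<le> good_count n m eps L A T b beta}"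
    if "A \<in> {A. A \<subseteq> {..<n} \<and> card A = a}" for A
    using that params(1) by (intro prob_good_count_given_A[OF _ _ assms(5) h_def params(4,5)
          params(6)[THEN eq_refl] params(3) L_bounds]) simp_all
  have "{..<a} \<in> {A. A \<subseteq> {..<n} \<and> card A = a}" "finite {A. A \<subseteq> {..<n} \<and> card A = a}"
    using params(2) by auto
  then have support: "set_pmf (pmf_of_set {A. A \<subseteq> {..<n} \<and> card A = a}) = {A. A \<subseteq> {..<n} \<and> card A = a}"
    by (intro set_pmf_of_set) blast+
  show ?thesis
    unfolding ATb_pmf_def by (rule prob_bind_pmf_lower_bound) (use given_A support in simp)
qed

theorem mainTheorem6:
  shows "\<exists>\<delta>::real. \<delta> > 0 \<and> (\<exists>c0::real. c0 > 0 \<and> (\<exists>N::nat.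
    \<forall>n::nat. \<forall>eps::real. \<forall>a m k :: nat.
      n \<ge> N \<longrightarrow> c0 / sqrt (real n) \<le> eps \<longrightarrow> eps < 1 \<longrightarrow>
      real a = sqrt (real n) / eps \<longrightarrow> m = n - a \<longrightarrow>
      real k = sqrt (real m) / eps \<longrightarrow>
      (let L = nat \<lfloor>0.1 * 2 powr (real k)\<rfloor> in
        measure_pmf.prob (ATb_pmf n a k L)
          {(A, T, b). real (good_count n m eps L A T b True) \<ge> \<delta> * eps * 2 ^ m} \<ge> 0.01
      \<and> measure_pmf.prob (ATb_pmf n a k L)
          {(A, T, b). real (good_count n m eps L A T b False) \<ge> \<delta> * eps * 2 ^ m} \<ge> 0.01)))"
proof (rule exI[of _ "1 / 20000"], rule conjI, simp, rule exI[of _ 100], rule conjI, simp,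
       rule exI[of _ 1], intro allI impI)
  fix n :: nat and eps :: real and a m k :: nat
  assume "1 \<le> n" "100 / sqrt n \<le> eps" "eps < 1"
    and "real a = sqrt n / eps" "m = n - a" "real k = sqrt m / eps"
  from prob_good_count_lower_bound[OF this refl]
  show "let L = nat \<lfloor>0.1 * 2 powr (real k)\<rfloor> in
        measure_pmf.prob (ATb_pmf n a k L)
          {(A, T, b). real (good_count n m eps L A T b True) \<ge> 1 / 20000 * eps * 2 ^ m} \<ge> 0.01
      \<and> measure_pmf.prob (ATb_pmf n a k L)
          {(A, T, b). real (good_count n m eps L A T b False) \<ge> 1 / 20000 * eps * 2 ^ m} \<ge> 0.01"
    unfolding Let_def by blast
qed

end
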